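(* Fix positive integers $n$ and $k$. Among all sequences $(a_1,\dots,a_k)$ of positive integers with $\sum_{i=1}^k a_i=n$ that arise as the sequence of step sizes in the construction of some $k$-atom on $n$ vertices, every sequence minimizing $\sum_{1\le i<j\le k}\sqrt{a_i/a_j}$ is non-decreasing.
   Context: $k$-atoms are built recursively in $k$ steps: step $1$ creates a single vertex ($K_1$, the only $1$-atom). At step $i+1$, from an $i$-atom $A_i$ one obtains an $(i+1)$-atom by adding a new independent set $I$ such that each vertex of $A_i$ has exactly one neighbor in $I$ and each vertex of $I$ has at least one neighbor in $A_i$. The step sizes are $a_1=1$ and $a_{i+1}=|I|$ for the set added at step $i+1$, so that $\sum_i a_i$ is the number of vertices of the resulting $k$-atom. *)

theory Defs
  imports Complex_Main
begin

text \<open>A graph is given by a finite vertex set V :: nat set and a set E of edges,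
each edge a two-element set {u,w}.  katom V E as means: (V,E) is a
(length as)-atom built with step sizes as = [a_1,...,a_k].\<close>

inductive katom :: "nat set \<Rightarrow> nat set set \<Rightarrow> nat list \<Rightarrow> bool" where
  base: "katom {v} {} [1]"
| step: "\<lbrakk> katom V E as; finite I; I \<inter> V = {};
           F \<subseteq> {{u, w} | u w. u \<in> V \<and> w \<in> I};
           \<forall>u\<in>V. \<exists>!w. w \<in> I \<and> {u, w} \<in> F;
           \<forall>w\<in>I. \<exists>u\<in>V. {u, w} \<in> F \<rbrakk>
         \<Longrightarrow> katom (V \<union> I) (E \<union> F) (as @ [card I])"

definition atom_cost :: "nat list \<Rightarrow> real" where
  "atom_cost as = (\<Sum>j<length as. \<Sum>i<j. sqrt (real (as ! i) / real (as ! j)))"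

definition realizable_steps :: "nat \<Rightarrow> nat \<Rightarrow> nat list set" where
  "realizable_steps n k = {as. length as = k \<and> (\<forall>a\<in>set as. 0 < a) \<and> sum_list as = n \<and>
       (\<exists>V E. katom V E as \<and> card V = n)}"

end

theory Submission
  imports Defs
begin

text \<open>Every old vertex has exactly one neighbour in the new independent set and every new
vertex has one, so the new set is nonempty and no larger than the graph built so far;
conversely any such step sizes can be realised.  The step sizes of atoms are thus exactly
the sequences starting with 1 in which each term lies between 1 and the sum of its
predecessors.  This condition survives swapping adjacent terms x > y into the order y, x,
and the swap changes only the term of that pair in the cost, lowering it from sqrt(x/y) to
sqrt(y/x).  Hence a minimiser has no descent.\<close>

fun admissible_steps :: "nat \<Rightarrow> nat list \<Rightarrow> bool" where
  "admissible_steps s [] = True"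
| "admissible_steps s (a # as) = (0 < a \<and> a \<le> s \<and> admissible_steps (s + a) as)"

lemma admissible_steps_append:
  "admissible_steps s (xs @ ys) \<longleftrightarrow> admissible_steps s xs \<and> admissible_steps (s + sum_list xs) ys"
  by (induction xs arbitrary: s) (auto simp: add.assoc)

lemma admissible_steps_pos: "admissible_steps s as \<Longrightarrow> a \<in> set as \<Longrightarrow> 0 < a"
  by (induction as arbitrary: s) auto

lemma admissible_steps_swap:
  assumes "admissible_steps s (xs @ [x, y] @ zs)" and "y < x"
  shows "admissible_steps s (xs @ [y, x] @ zs)"
  using assms by (auto simp: admissible_steps_append ac_simps)

lemma card_le_card_if_unique_neighbour:
  assumes "finite V"
    and "\<forall>u\<in>V. \<exists>!w. w \<in> I \<and> {u, w} \<in> F"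
    and "\<forall>w\<in>I. \<exists>u\<in>V. {u, w} \<in> F"
  shows "card I \<le> card V"
proof (rule surj_card_le[OF \<open>finite V\<close>])
  show "I \<subseteq> (\<lambda>u. THE w. w \<in> I \<and> {u, w} \<in> F) ` V"
  proof
    fix w assume "w \<in> I"
    with assms(3) obtain u where u: "u \<in> V" "{u, w} \<in> F" by blast
    with assms(2) \<open>w \<in> I\<close> have "(THE w. w \<in> I \<and> {u, w} \<in> F) = w"
      by (metis (no_types, lifting) the_equality)
    with u show "w \<in> (\<lambda>u. THE w. w \<in> I \<and> {u, w} \<in> F) ` V" by force
  qed
qed

lemma katom_finite_card: "katom V E as \<Longrightarrow> finite V \<and> card V = sum_list as"
  by (induction rule: katom.induct) (auto simp: card_Un_disjoint Int_commute)

lemma katom_admissible_steps: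
  "katom V E as \<Longrightarrow> \<exists>ys. as = 1 # ys \<and> admissible_steps 1 ys"
proof (induction rule: katom.induct)
  case base
  then show ?case by simp
next
  case (step V E as I F)
  from step.IH obtain ys where ys: "as = 1 # ys" "admissible_steps 1 ys" by blast
  have V: "finite V" "card V = sum_list as"
    using katom_finite_card[OF step.hyps(1)] by auto
  then obtain u where "u \<in> V" using ys by fastforce
  with step.hyps(5) have "I \<noteq> {}" by blast
  then have "0 < card I" using step.hyps(2) by (simp add: card_gt_0_iff)
  moreover have "card I \<le> card V"
    using card_le_card_if_unique_neighbour[OF V(1) step.hyps(5,6)] .
  ultimately have "admissible_steps 1 (ys @ [card I])"
    using ys V by (simp add: admissible_steps_append)
  then show ?case using ys by simp
qed

lemma katom_extend:
  assumes "katom {0..<s} E as" and "0 < a" and "a \<le> s"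
  shows "\<exists>F. katom {0..<s + a} (E \<union> F) (as @ [a])"
proof -
  define I where "I = {s..<s + a}"
  define F where "F = (\<lambda>u. {u, s + u mod a}) ` {0..<s}"
  have "katom ({0..<s} \<union> I) (E \<union> F) (as @ [card I])"
  proof (rule katom.step[OF assms(1)])
    show "finite I" and "I \<inter> {0..<s} = {}" by (auto simp: I_def)
    show "F \<subseteq> {{u, w} | u w. u \<in> {0..<s} \<and> w \<in> I}"
      unfolding F_def
    proof (rule image_subsetI)
      fix u assume "u \<in> {0..<s}"
      moreover have "s + u mod a \<in> I" using \<open>0 < a\<close> by (simp add: I_def)
      ultimately show "{u, s + u mod a} \<in> {{u, w} | u w. u \<in> {0..<s} \<and> w \<in> I}" by blast
    qed
    show "\<forall>u\<in>{0..<s}. \<exists>!w. w \<in> I \<and> {u, w} \<in> F"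
    proof
      fix u assume u: "u \<in> {0..<s}"
      have "w = s + u mod a" if "w \<in> I" "{u, w} \<in> F" for w
      proof -
        from that obtain u' where "u' < s" "{u, w} = {u', s + u' mod a}" by (auto simp: F_def)
        with u \<open>w \<in> I\<close> show ?thesis by (auto simp: I_def doubleton_eq_iff)
      qed
      moreover have "s + u mod a \<in> I \<and> {u, s + u mod a} \<in> F"
        using u \<open>0 < a\<close> by (auto simp: F_def I_def)
      ultimately show "\<exists>!w. w \<in> I \<and> {u, w} \<in> F" by blast
    qed
    show "\<forall>w\<in>I. \<exists>u\<in>{0..<s}. {u, w} \<in> F"
    proof
      fix w assume "w \<in> I"
      then have "w - s < s" and "w = s + (w - s) mod a"
        using \<open>a \<le> s\<close> by (auto simp: I_def)
      then have "{w - s, w} \<in> F"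
        unfolding F_def by (intro image_eqI[of _ _ "w - s"]) auto
      with \<open>w - s < s\<close> show "\<exists>u\<in>{0..<s}. {u, w} \<in> F" by auto
    qed
  qed
  moreover have "{0..<s} \<union> I = {0..<s + a}" and "card I = a"
    by (auto simp: I_def)
  ultimately show ?thesis by auto
qed

lemma admissible_steps_imp_katom:
  "admissible_steps 1 ys \<Longrightarrow> \<exists>E. katom {0..<1 + sum_list ys} E (1 # ys)"
proof (induction ys rule: rev_induct)
  case Nil
  have "katom {0} {} [1]" by (rule katom.base)
  then show ?case by auto
next
  case (snoc a ys)
  then have "admissible_steps 1 ys" and a: "0 < a" "a \<le> 1 + sum_list ys"
    by (auto simp: admissible_steps_append)
  with snoc.IH obtain E where "katom {0..<1 + sum_list ys} E (1 # ys)" by blast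
  from katom_extend[OF this a] show ?case by (auto simp: add.assoc)
qed

lemma realizable_steps_iff:
  "as \<in> realizable_steps n k \<longleftrightarrow>
     length as = k \<and> sum_list as = n \<and> (\<exists>ys. as = 1 # ys \<and> admissible_steps 1 ys)"
proof
  assume "as \<in> realizable_steps n k"
  then show "length as = k \<and> sum_list as = n \<and> (\<exists>ys. as = 1 # ys \<and> admissible_steps 1 ys)"
    by (auto simp: realizable_steps_def dest: katom_admissible_steps)
next
  assume "length as = k \<and> sum_list as = n \<and> (\<exists>ys. as = 1 # ys \<and> admissible_steps 1 ys)"
  then obtain ys where "length as = k" "sum_list as = n" "as = 1 # ys" "admissible_steps 1 ys"
    by blast
  moreover obtain E where "katom {0..<1 + sum_list ys} E (1 # ys)"
    using admissible_steps_imp_katom[OF \<open>admissible_steps 1 ys\<close>] by blast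
  ultimately show "as \<in> realizable_steps n k"
    unfolding realizable_steps_def by (force dest: admissible_steps_pos)
qed

definition cross_cost :: "nat list \<Rightarrow> nat list \<Rightarrow> real" where
  "cross_cost xs ys = (\<Sum>p\<leftarrow>xs. \<Sum>q\<leftarrow>ys. sqrt (real p / real q))"

lemma atom_cost_snoc:
  "atom_cost (as @ [a]) = atom_cost as + (\<Sum>b\<leftarrow>as. sqrt (real b / real a))"
proof -
  have "atom_cost (as @ [a]) = (\<Sum>j<length as. \<Sum>i<j. sqrt (real (as ! i) / real (as ! j)))
      + (\<Sum>i<length as. sqrt (real (as ! i) / real a))"
    unfolding atom_cost_def by (simp add: nth_append)
  then show ?thesis
    by (simp add: atom_cost_def sum_list_sum_nth atLeast0LessThan)
qed

lemma atom_cost_append: "atom_cost (xs @ ys) = atom_cost xs + atom_cost ys + cross_cost xs ys"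
proof (induction ys rule: rev_induct)
  case Nil
  then show ?case by (simp add: atom_cost_def cross_cost_def)
next
  case (snoc a ys)
  then show ?case
    using atom_cost_snoc[of "xs @ ys" a] atom_cost_snoc[of ys a]
    by (simp add: cross_cost_def sum_list_addf)
qed

lemma atom_cost_swap:
  "atom_cost (xs @ [x, y] @ zs) - atom_cost (xs @ [y, x] @ zs) =
     sqrt (real x / real y) - sqrt (real y / real x)"
proof -
  have pair: "atom_cost [p, q] = sqrt (real p / real q)" for p q
    by (simp add: atom_cost_def lessThan_Suc)
  have "cross_cost [x, y] zs = cross_cost [y, x] zs"
    and "cross_cost xs ([x, y] @ zs) = cross_cost xs ([y, x] @ zs)"
    by (simp_all add: cross_cost_def ac_simps)
  then show ?thesis
    using atom_cost_append[of xs "[x, y] @ zs"] atom_cost_append[of xs "[y, x] @ zs"]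
      atom_cost_append[of "[x, y]" zs] atom_cost_append[of "[y, x]" zs] pair[of x y] pair[of y x]
    by linarith
qed

lemma sqrt_ratio_less:
  assumes "0 < y" and "y < x"
  shows "sqrt (real y / real x) < sqrt (real x / real y)"
proof -
  have "real y / real x < 1" and "1 < real x / real y" using assms by simp_all
  then show ?thesis by simp
qed

lemma not_sorted_imp_adjacent_descent:
  fixes xs :: "'a :: linorder list"
  assumes "\<not> sorted xs"
  shows "\<exists>us x y vs. xs = us @ [x, y] @ vs \<and> y < x"
  using assms
proof (induction xs)
  case Nil
  then show ?case by simp
next
  case (Cons a xs)
  show ?case
  proof (cases "sorted xs")
    case True
    with Cons.prems obtain b ws where "xs = b # ws" "b < a"
      by (cases xs) auto
    then show ?thesis by (metis append_Cons append_Nil)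
  next
    case False
    with Cons.IH obtain us x y vs where "xs = us @ [x, y] @ vs" "y < x" by blast
    then show ?thesis by (metis append_Cons)
  qed
qed

theorem lemma4:
  fixes n k :: nat and as :: "nat list"
  assumes "0 < n" and "0 < k"
    and "as \<in> realizable_steps n k"
    and "\<forall>bs \<in> realizable_steps n k. atom_cost as \<le> atom_cost bs"
  shows "sorted as"
proof (rule ccontr)
  assume "\<not> sorted as"
  from assms(3) obtain ys where
    as: "length as = k" "sum_list as = n" "as = 1 # ys" and ys: "admissible_steps 1 ys"
    by (auto simp: realizable_steps_iff)
  have "\<not> sorted ys"
    using \<open>\<not> sorted as\<close> as(3) admissible_steps_pos[OF ys] by (auto simp: Suc_le_eq)
  then obtain us x y vs where ys_split: "ys = us @ [x, y] @ vs" and "y < x"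
    using not_sorted_imp_adjacent_descent by blast
  define bs where "bs = 1 # us @ [y, x] @ vs"
  have "bs \<in> realizable_steps n k"
    using as ys admissible_steps_swap[OF _ \<open>y < x\<close>]
    by (auto simp: realizable_steps_iff bs_def ys_split)
  with assms(4) have "atom_cost as \<le> atom_cost bs" by blast
  moreover have "atom_cost as - atom_cost bs = sqrt (real x / real y) - sqrt (real y / real x)"
    using atom_cost_swap[of "1 # us"] by (simp add: as(3) ys_split bs_def)
  moreover have "0 < y" using admissible_steps_pos[OF ys] by (simp add: ys_split)
  ultimately show False using sqrt_ratio_less[OF _ \<open>y < x\<close>] by linarith
qed

end
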